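(* Consider the Utility Maximization problem in the MPOI world with ground set $J$, downward-closed constraints $\mathcal{F}$ with convex relaxation $P_{\mathcal{F}}$, additive objective $f(I,x)=\sum_{i\in I}x_i$, and DAG Markov systems $S_i=(V_i,P_i,s_i,T_i,\pi_i,r_i)$, $i\in J$, with non-negative values. Then the optimal utility of an adaptive strategy (without any commitment constraint) is at most the optimal value of the linear program $$\max\ \sum_{i\in J}\Big(\sum_{u\in T_i}r_i^u z_i^u-\sum_{u\in V_i\setminus T_i}\pi_i^u z_i^u\Big)$$ subject to: $y_i^{s_i}=1$ for all $i\in J$; $y_i^u=\sum_{v\in V_i}(P_i)_{vu}\,z_i^v$ for all $i\in J$, $u\in V_i\setminus\{s_i\}$; $x_i=\sum_{u\in T_i}z_i^u$ for all $i\in J$; $z_i^u\le y_i^u$ for all $i\in J$, $u\in V_i$; $x\in P_{\mathcal{F}}$; and $x_i,y_i^u,z_i^u\ge0$ for all $i\in J$, $u\in V_i$.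
   Context: A Markov system $S=(V,P,s,T,\pi,r)$ consists of a Markov chain on a finite state space $V$ with transition matrix $P$ ($P_{uv}$ is the probability of moving from $u$ to $v$), a starting state $s$, a set $T\subseteq V$ of absorbing destination states, prices $\pi^u\ge0$ for $u\in V\setminus T$, and values $r^t\ge0$ for $t\in T$; every state reaches some destination state. It is a DAG Markov system if the directed graph with an arc $u\to v$ whenever $u\notin T$ and $P_{uv}>0$ is acyclic. Utility Maximization in the MPOI world: each $S_i$ starts at $s_i$; at each step the player either advances some $S_i$ from its current non-destination state $u$, paying $\pi_i^u$ (the state then moves randomly according to $P_i$), or ends the game by selecting a set $I\in\mathcal{F}$ of ready elements (elements whose Markov system is in a destination state). The utility of an adaptive strategy is $\mathbb{E}[\sum_{i\in I}r_i^{\mathrm{dest}(i)}-\text{total price paid}]$. $P_{\mathcal{F}}\subseteq[0,1]^J$ is a convex set containing the indicator vectors of all sets in $\mathcal{F}$. (Intended meaning of variables: $y_i^u$ = probability state $u$ of $S_i$ is reached, $z_i^u$ = probability $S_i$ is played from $u$, or selected when $u\in T_i$.) *)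

theory Defs
  imports "HOL-Analysis.Analysis"
begin

definition ms_arcs :: "'s set \<Rightarrow> ('s \<Rightarrow> 's \<Rightarrow> real) \<Rightarrow> 's set \<Rightarrow> ('s \<times> 's) set" where
  "ms_arcs V P T = {(u, v). u \<in> V - T \<and> 0 < P u v}"

text \<open>A Markov system (V, P, s, T, pi, r).  States of all systems live in a common
type 's; V is the (finite) state space, P u v the transition probability from u to v.\<close>

definition markov_system ::
  "'s set \<Rightarrow> ('s \<Rightarrow> 's \<Rightarrow> real) \<Rightarrow> 's \<Rightarrow> 's set \<Rightarrow> ('s \<Rightarrow> real) \<Rightarrow> ('s \<Rightarrow> real) \<Rightarrow> bool" where
  "markov_system V P s T price val \<longleftrightarrow>
     finite V \<and> s \<in> V \<and> T \<subseteq> V \<and>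
     (\<forall>u\<in>V. \<forall>v. 0 \<le> P u v) \<and>
     (\<forall>u\<in>V. \<forall>v. v \<notin> V \<longrightarrow> P u v = 0) \<and>
     (\<forall>u\<in>V. (\<Sum>v\<in>V. P u v) = 1) \<and>
     (\<forall>t\<in>T. P t t = 1) \<and>
     (\<forall>u\<in>V - T. 0 \<le> price u) \<and>
     (\<forall>t\<in>T. 0 \<le> val t) \<and>
     (\<forall>u\<in>V. \<exists>t\<in>T. (u, t) \<in> (ms_arcs V P T)\<^sup>*)"

definition dag_markov_system ::
  "'s set \<Rightarrow> ('s \<Rightarrow> 's \<Rightarrow> real) \<Rightarrow> 's \<Rightarrow> 's set \<Rightarrow> ('s \<Rightarrow> real) \<Rightarrow> ('s \<Rightarrow> real) \<Rightarrow> bool" where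
  "dag_markov_system V P s T price val \<longleftrightarrow>
     markov_system V P s T price val \<and> acyclic (ms_arcs V P T)"

definition convex_fun_set :: "('i \<Rightarrow> real) set \<Rightarrow> bool" where
  "convex_fun_set C \<longleftrightarrow>
     (\<forall>x\<in>C. \<forall>y\<in>C. \<forall>t::real. 0 \<le> t \<and> t \<le> 1 \<longrightarrow> (\<lambda>i. t * x i + (1 - t) * y i) \<in> C)"

datatype 'i action = Advance 'i | Select "'i set"

text \<open>A history is the list of advances made so far together with the observed new states.
An adaptive (deterministic) strategy maps histories to actions.\<close>
type_synonym ('i, 's) history = "('i \<times> 's) list"
type_synonym ('i, 's) strategy = "('i, 's) history \<Rightarrow> 'i action"

definition config :: "('i \<Rightarrow> 's) \<Rightarrow> ('i, 's) history \<Rightarrow> 'i \<Rightarrow> 's" where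
  "config s h = foldl (\<lambda>c (i, v). c(i := v)) s h"

inductive_set reachable_hist ::
  "('i \<Rightarrow> 's \<Rightarrow> 's \<Rightarrow> real) \<Rightarrow> ('i \<Rightarrow> 's) \<Rightarrow> ('i, 's) strategy \<Rightarrow> ('i, 's) history set"
  for P s \<sigma> where
  Nil: "[] \<in> reachable_hist P s \<sigma>"
| Step: "h \<in> reachable_hist P s \<sigma> \<Longrightarrow> \<sigma> h = Advance i \<Longrightarrow> 0 < P i (config s h i) v
          \<Longrightarrow> h @ [(i, v)] \<in> reachable_hist P s \<sigma>"

definition valid_strategy ::
  "'i set \<Rightarrow> 'i set set \<Rightarrow> ('i \<Rightarrow> 's \<Rightarrow> 's \<Rightarrow> real) \<Rightarrow> ('i \<Rightarrow> 's) \<Rightarrow> ('i \<Rightarrow> 's set)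
     \<Rightarrow> ('i, 's) strategy \<Rightarrow> bool" where
  "valid_strategy J F P s T \<sigma> \<longleftrightarrow>
     (\<forall>h\<in>reachable_hist P s \<sigma>.
        (case \<sigma> h of
           Advance i \<Rightarrow> i \<in> J \<and> config s h i \<notin> T i
         | Select I \<Rightarrow> I \<in> F \<and> (\<forall>i\<in>I. config s h i \<in> T i)))"

fun util_fuel ::
  "('i \<Rightarrow> 's set) \<Rightarrow> ('i \<Rightarrow> 's \<Rightarrow> 's \<Rightarrow> real) \<Rightarrow> ('i \<Rightarrow> 's) \<Rightarrow> ('i \<Rightarrow> 's \<Rightarrow> real) \<Rightarrow> ('i \<Rightarrow> 's \<Rightarrow> real)
     \<Rightarrow> ('i, 's) strategy \<Rightarrow> nat \<Rightarrow> ('i, 's) history \<Rightarrow> real" where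
  "util_fuel V P s price val \<sigma> 0 h = 0"
| "util_fuel V P s price val \<sigma> (Suc n) h =
     (case \<sigma> h of
        Select I \<Rightarrow> (\<Sum>i\<in>I. val i (config s h i))
      | Advance i \<Rightarrow> - price i (config s h i)
           + (\<Sum>v\<in>V i. P i (config s h i) v * util_fuel V P s price val \<sigma> n (h @ [(i, v)])))"

text \<open>In a world of DAG Markov systems each system i can be
advanced at most card (V i) - 1 times, so a valid strategy ends the game after fewer than
the budget below; hence the budget never runs out and this is the exact expected utility.\<close>
definition utility ::
  "'i set \<Rightarrow> ('i \<Rightarrow> 's set) \<Rightarrow> ('i \<Rightarrow> 's \<Rightarrow> 's \<Rightarrow> real) \<Rightarrow> ('i \<Rightarrow> 's) \<Rightarrow> ('i \<Rightarrow> 's \<Rightarrow> real)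
     \<Rightarrow> ('i \<Rightarrow> 's \<Rightarrow> real) \<Rightarrow> ('i, 's) strategy \<Rightarrow> real" where
  "utility J V P s price val \<sigma> =
     util_fuel V P s price val \<sigma> (Suc (\<Sum>i\<in>J. card (V i))) []"

definition lp_feasible ::
  "'i set \<Rightarrow> ('i \<Rightarrow> 's set) \<Rightarrow> ('i \<Rightarrow> 's \<Rightarrow> 's \<Rightarrow> real) \<Rightarrow> ('i \<Rightarrow> 's) \<Rightarrow> ('i \<Rightarrow> 's set)
     \<Rightarrow> ('i \<Rightarrow> real) set \<Rightarrow> (('i \<Rightarrow> real) \<times> ('i \<Rightarrow> 's \<Rightarrow> real) \<times> ('i \<Rightarrow> 's \<Rightarrow> real)) set" where
  "lp_feasible J V P s T PF = {(x, y, z).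
     (\<forall>i\<in>J. y i (s i) = 1) \<and>
     (\<forall>i\<in>J. \<forall>u\<in>V i - {s i}. y i u = (\<Sum>v\<in>V i - T i. P i v u * z i v)) \<and>
     (\<forall>i\<in>J. x i = (\<Sum>u\<in>T i. z i u)) \<and>
     (\<forall>i\<in>J. \<forall>u\<in>V i. z i u \<le> y i u) \<and>
     x \<in> PF \<and>
     (\<forall>i\<in>J. 0 \<le> x i \<and> (\<forall>u\<in>V i. 0 \<le> y i u \<and> 0 \<le> z i u))}"

definition lp_objective ::
  "'i set \<Rightarrow> ('i \<Rightarrow> 's set) \<Rightarrow> ('i \<Rightarrow> 's set) \<Rightarrow> ('i \<Rightarrow> 's \<Rightarrow> real) \<Rightarrow> ('i \<Rightarrow> 's \<Rightarrow> real)
     \<Rightarrow> ('i \<Rightarrow> 's \<Rightarrow> real) \<Rightarrow> real" where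
  "lp_objective J V T price val z =
     (\<Sum>i\<in>J. (\<Sum>u\<in>T i. val i u * z i u) - (\<Sum>u\<in>V i - T i. price i u * z i u))"

end

theory Submission
  imports Defs
begin

text \<open>For a fixed strategy let z_i^u be the expected number of times it plays S_i from
state u, or selects i while S_i is in u.  By linearity of expectation the utility is the LP
objective at z.  The vector x_i = \<Sum>_{u \<in> T_i} z_i^u, the probability that i is selected, is
an average of indicator vectors of feasible sets and hence lies in P_F.  Every occurrence of S_i
in a state other than the initial one follows a play from a predecessor, so
z_i^u \<le> [u = s_i] + \<Sum>_v P_vu z_i^v; since the systems are acyclic, s_i has no predecessor
reachable from s_i, whence z_i^{s_i} \<le> 1.  So (x, y, z) is LP-feasible for y_i^{s_i} = 1 and
y_i^u = \<Sum>_v P_vu z_i^v otherwise.\<close>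

fun occupation :: "('i \<Rightarrow> 's set) \<Rightarrow> ('i \<Rightarrow> 's \<Rightarrow> 's \<Rightarrow> real) \<Rightarrow> ('i \<Rightarrow> 's) \<Rightarrow> ('i, 's) strategy
    \<Rightarrow> nat \<Rightarrow> ('i, 's) history \<Rightarrow> 'i \<Rightarrow> 's \<Rightarrow> real" where
  "occupation V P s \<sigma> 0 h = (\<lambda>i u. 0)"
| "occupation V P s \<sigma> (Suc n) h =
     (case \<sigma> h of
        Select I \<Rightarrow> (\<lambda>i u. if i \<in> I \<and> u = config s h i then 1 else 0)
      | Advance j \<Rightarrow> (\<lambda>i u. (if i = j \<and> u = config s h j then 1 else 0)
           + (\<Sum>v\<in>V j. P j (config s h j) v * occupation V P s \<sigma> n (h @ [(j, v)]) i u)))"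

lemma config_Nil [simp]: "config s [] = s"
  by (simp add: config_def)

lemma config_snoc [simp]: "config s (h @ [(i, v)]) = (config s h)(i := v)"
  by (simp add: config_def)

lemma convex_fun_set_sum:
  assumes "convex_fun_set C" and "finite A"
    and "\<forall>v\<in>A. 0 \<le> p v" and "sum p A = 1" and "\<forall>v\<in>A. 0 < p v \<longrightarrow> f v \<in> C"
  shows "(\<lambda>i. \<Sum>v\<in>A. p v * f v i) \<in> C"
  using assms(2-)
proof (induction A arbitrary: p rule: finite_induct)
  case empty
  then show ?case by simp
next
  case (insert a A)
  have sum_A: "sum p A = 1 - p a" and nonneg_A: "0 \<le> sum p A"
    using insert by (simp_all add: sum_nonneg)
  have split: "(\<lambda>i. \<Sum>v\<in>insert a A. p v * f v i) = (\<lambda>i. p a * f a i + (\<Sum>v\<in>A. p v * f v i))"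
    using insert.hyps by simp
  consider "p a = 0" | "p a = 1" | "0 < p a" "p a < 1"
    using insert.prems(1) sum_A nonneg_A by force
  then show ?case
  proof cases
    case 1
    then show ?thesis using insert.IH[of p] insert.prems sum_A split by simp
  next
    case 2
    then have "\<forall>v\<in>A. p v = 0"
      using sum_nonneg_eq_0_iff[OF insert.hyps(1), of p] insert.prems(1) sum_A by simp
    then show ?thesis using 2 split insert.prems(3) by simp
  next
    case 3
    define q where "q v = p v / (1 - p a)" for v
    have "(\<lambda>i. \<Sum>v\<in>A. q v * f v i) \<in> C"
      using insert.IH[of q] insert.prems 3 sum_A
      by (simp add: q_def sum_divide_distrib[symmetric] zero_less_divide_iff)
    then have "(\<lambda>i. p a * f a i + (1 - p a) * (\<Sum>v\<in>A. q v * f v i)) \<in> C"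
      using assms(1) insert.prems(3) 3 unfolding convex_fun_set_def by simp
    moreover have "(\<lambda>i. p a * f a i + (1 - p a) * (\<Sum>v\<in>A. q v * f v i))
        = (\<lambda>i. \<Sum>v\<in>insert a A. p v * f v i)"
      using split 3 by (simp add: q_def sum_distrib_left)
    ultimately show ?thesis by simp
  qed
qed

lemma lp_objective_affine:
  assumes "finite A"
  shows "lp_objective J V T price val (\<lambda>i u. a i u + (\<Sum>v\<in>A. c v * b v i u))
       = lp_objective J V T price val a + (\<Sum>v\<in>A. c v * lp_objective J V T price val (b v))"
  unfolding lp_objective_def
  by (simp add: algebra_simps sum.distrib sum_distrib_left sum_subtractf sum.swap[of _ A])

lemma lp_objective_advance:
  assumes "finite J" and "j \<in> J" and "finite (V j)" and "w \<in> V j - T j"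
  shows "lp_objective J V T price val (\<lambda>i u. if i = j \<and> u = w then 1 else 0) = - price j w"
proof -
  have "lp_objective J V T price val (\<lambda>i u. if i = j \<and> u = w then 1 else 0)
      = (\<Sum>i\<in>J. if i = j then - price j w else 0)"
    unfolding lp_objective_def
    using assms(3,4) by (intro sum.cong) (auto simp: if_distrib cong: if_cong intro!: sum.neutral)
  then show ?thesis
    using assms(1,2) by simp
qed

lemma lp_objective_select:
  assumes "finite J" and "I \<subseteq> J" and "\<And>i. i \<in> I \<Longrightarrow> c i \<in> T i \<and> finite (T i)"
  shows "lp_objective J V T price val (\<lambda>i u. if i \<in> I \<and> u = c i then 1 else 0)
       = (\<Sum>i\<in>I. val i (c i))"
proof -
  have "lp_objective J V T price val (\<lambda>i u. if i \<in> I \<and> u = c i then 1 else 0)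
      = (\<Sum>i\<in>J. if i \<in> I then val i (c i) else 0)"
    unfolding lp_objective_def
    using assms(3) by (intro sum.cong) (auto simp: if_distrib cong: if_cong intro!: sum.neutral)
  then show ?thesis
    using assms(1,2) by (simp add: sum.If_cases Int_absorb1)
qed

lemma expected_update_indicator:
  fixes p :: "'s \<Rightarrow> real"
  assumes "finite A" and "\<And>v. v \<notin> A \<Longrightarrow> p v = 0" and "sum p A = 1"
  shows "(\<Sum>v\<in>A. p v * (if u = (c(j := v)) i then 1 else 0))
       = (if i = j then p u else if u = c i then 1 else 0)"
proof (cases "i = j")
  case True
  then show ?thesis
    using assms(1,2) by (cases "u \<in> A") (simp_all add: mult.commute[of "p _"] if_distrib sum.delta cong: if_cong)
next
  case False
  then show ?thesis
    using assms(3) by (simp add: sum_distrib_right[symmetric])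
qed

locale mpoi_play =
  fixes J :: "'i set" and F :: "'i set set"
    and V :: "'i \<Rightarrow> 's set" and P :: "'i \<Rightarrow> 's \<Rightarrow> 's \<Rightarrow> real" and s :: "'i \<Rightarrow> 's"
    and T :: "'i \<Rightarrow> 's set" and price val :: "'i \<Rightarrow> 's \<Rightarrow> real"
    and \<sigma> :: "('i, 's) strategy"
  assumes finite_J: "finite J"
    and F_subset: "F \<subseteq> Pow J"
    and markov: "\<And>i. i \<in> J \<Longrightarrow> markov_system (V i) (P i) (s i) (T i) (price i) (val i)"
    and valid: "valid_strategy J F P s T \<sigma>"
begin

abbreviation "occ \<equiv> occupation V P s \<sigma>"
abbreviation "reachable \<equiv> reachable_hist P s \<sigma>"
abbreviation "cfg h \<equiv> config s h"

lemma finite_states: "i \<in> J \<Longrightarrow> finite (V i)"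
  and start_state: "i \<in> J \<Longrightarrow> s i \<in> V i"
  and destinations_subset: "i \<in> J \<Longrightarrow> T i \<subseteq> V i"
  and transition_nonneg: "i \<in> J \<Longrightarrow> u \<in> V i \<Longrightarrow> 0 \<le> P i u v"
  and transition_outside: "i \<in> J \<Longrightarrow> u \<in> V i \<Longrightarrow> v \<notin> V i \<Longrightarrow> P i u v = 0"
  and transition_sum: "i \<in> J \<Longrightarrow> u \<in> V i \<Longrightarrow> (\<Sum>v\<in>V i. P i u v) = 1"
  using markov unfolding markov_system_def by auto

lemma finite_destinations: "i \<in> J \<Longrightarrow> finite (T i)"
  using finite_states destinations_subset by (rule finite_subset[rotated])

lemma advance_valid: "h \<in> reachable \<Longrightarrow> \<sigma> h = Advance j \<Longrightarrow> j \<in> J \<and> cfg h j \<notin> T j"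
  using valid by (force simp: valid_strategy_def)

lemma select_valid:
  "h \<in> reachable \<Longrightarrow> \<sigma> h = Select I \<Longrightarrow> I \<in> F \<and> I \<subseteq> J \<and> (\<forall>i\<in>I. cfg h i \<in> T i)"
  using valid F_subset by (force simp: valid_strategy_def)

lemma config_in_states: "h \<in> reachable \<Longrightarrow> i \<in> J \<Longrightarrow> cfg h i \<in> V i"
proof (induction h arbitrary: i rule: reachable_hist.induct)
  case Nil
  then show ?case by (simp add: start_state)
next
  case (Step h j v)
  have "j \<in> J" using advance_valid Step.hyps by blast
  then have "v \<in> V j" using transition_outside Step by force
  then show ?case using Step by simp
qed

lemma advance_successor:
  assumes "h \<in> reachable" and "\<sigma> h = Advance j"
  shows "P j (cfg h j) v = 0 \<or> (0 < P j (cfg h j) v \<and> h @ [(j, v)] \<in> reachable)"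
proof -
  have "j \<in> J" using advance_valid assms by blast
  then have "0 \<le> P j (cfg h j) v"
    using transition_nonneg config_in_states assms(1) by blast
  then show ?thesis using reachable_hist.Step[OF assms] by force
qed

lemma occupation_nonneg: "h \<in> reachable \<Longrightarrow> 0 \<le> occ n h i u"
proof (induction n arbitrary: h)
  case 0
  then show ?case by simp
next
  case (Suc n)
  show ?case
  proof (cases "\<sigma> h")
    case (Advance j)
    have "0 \<le> P j (cfg h j) v * occ n (h @ [(j, v)]) i u" for v
      using advance_successor[OF Suc.prems Advance, of v] Suc.IH by force
    then show ?thesis using Advance by (simp add: sum_nonneg)
  qed simp
qed

abbreviation "arcs i \<equiv> ms_arcs (V i) (P i) (T i)"

lemma occupation_reaches:
  "h \<in> reachable \<Longrightarrow> occ n h i u \<noteq> 0 \<Longrightarrow> (cfg h i, u) \<in> (arcs i)\<^sup>*"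
proof (induction n arbitrary: h)
  case 0
  then show ?case by simp
next
  case (Suc n)
  show ?case
  proof (cases "\<sigma> h")
    case (Advance j)
    show ?thesis
    proof (cases "i = j \<and> u = cfg h j")
      case False
      then have "(\<Sum>v\<in>V j. P j (cfg h j) v * occ n (h @ [(j, v)]) i u) \<noteq> 0"
        using Suc.prems(2) Advance by auto
      then obtain v where "P j (cfg h j) v * occ n (h @ [(j, v)]) i u \<noteq> 0"
        using sum.not_neutral_contains_not_neutral by blast
      then have pos: "0 < P j (cfg h j) v" and "h @ [(j, v)] \<in> reachable"
        and "occ n (h @ [(j, v)]) i u \<noteq> 0"
        using advance_successor[OF Suc.prems(1) Advance, of v] by auto
      then have step: "(cfg (h @ [(j, v)]) i, u) \<in> (arcs i)\<^sup>*"
        using Suc.IH by blast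
      have "j \<in> J" and "cfg h j \<in> V j - T j"
        using advance_valid config_in_states Suc.prems(1) Advance by blast+
      then have "(cfg h j, v) \<in> arcs j"
        using pos by (simp add: ms_arcs_def)
      then show ?thesis
        using step by (cases "i = j") (auto intro: converse_rtrancl_into_rtrancl)
    qed simp
  next
    case (Select I)
    then show ?thesis using Suc.prems(2) by (auto split: if_splits)
  qed
qed

definition inflow :: "nat \<Rightarrow> ('i, 's) history \<Rightarrow> 'i \<Rightarrow> 's \<Rightarrow> real" where
  "inflow n h i u = (\<Sum>x\<in>V i - T i. P i x u * occ n h i x)"

lemma inflow_nonneg: "h \<in> reachable \<Longrightarrow> i \<in> J \<Longrightarrow> 0 \<le> inflow n h i u"
  unfolding inflow_def
  by (intro sum_nonneg mult_nonneg_nonneg) (auto intro: transition_nonneg occupation_nonneg)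

lemma inflow_advance:
  assumes "h \<in> reachable" and "\<sigma> h = Advance j" and "i \<in> J"
  shows "inflow (Suc n) h i u = (if i = j then P j (cfg h j) u else 0)
           + (\<Sum>v\<in>V j. P j (cfg h j) v * inflow n (h @ [(j, v)]) i u)"
proof -
  define w where "w = cfg h j"
  have "j \<in> J" and "w \<in> V j - T j"
    using advance_valid config_in_states assms(1,2) unfolding w_def by blast+
  then have start: "(\<Sum>x\<in>V i - T i. P i x u * (if i = j \<and> x = w then 1 else 0))
      = (if i = j then P j w u else 0)"
    using finite_states by (simp add: if_distrib cong: if_cong)
  have "inflow (Suc n) h i u = (\<Sum>x\<in>V i - T i. P i x u * (if i = j \<and> x = w then 1 else 0))
      + (\<Sum>x\<in>V i - T i. P i x u * (\<Sum>v\<in>V j. P j w v * occ n (h @ [(j, v)]) i x))"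
    using assms(2) unfolding inflow_def w_def by (simp add: distrib_left sum.distrib)
  also have "\<dots> = (if i = j then P j w u else 0)
      + (\<Sum>v\<in>V j. P j w v * inflow n (h @ [(j, v)]) i u)"
    unfolding start inflow_def
    by (simp add: sum_distrib_left sum.swap[of _ "V j"] mult.left_commute)
  finally show ?thesis
    unfolding w_def .
qed

lemma occupation_le_inflow:
  "h \<in> reachable \<Longrightarrow> i \<in> J \<Longrightarrow> occ n h i u \<le> (if u = cfg h i then 1 else 0) + inflow n h i u"
proof (induction n arbitrary: h)
  case 0
  then show ?case by (simp add: inflow_def)
next
  case (Suc n)
  show ?case
  proof (cases "\<sigma> h")
    case (Advance j)
    define w where "w = cfg h j"
    have j: "j \<in> J" and w: "w \<in> V j"
      using advance_valid config_in_states Suc.prems(1) Advance unfolding w_def by blast+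
    have child: "P j w v * occ n (h @ [(j, v)]) i u
        \<le> P j w v * ((if u = ((cfg h)(j := v)) i then 1 else 0) + inflow n (h @ [(j, v)]) i u)" for v
      using advance_successor[OF Suc.prems(1) Advance, of v] Suc.IH[of "h @ [(j, v)]"] Suc.prems(2)
      by (auto simp: w_def)
    have "occ (Suc n) h i u
        = (if i = j \<and> u = w then 1 else 0) + (\<Sum>v\<in>V j. P j w v * occ n (h @ [(j, v)]) i u)"
      using Advance by (simp add: w_def)
    also have "\<dots> \<le> (if i = j \<and> u = w then 1 else 0)
        + (\<Sum>v\<in>V j. P j w v * ((if u = ((cfg h)(j := v)) i then 1 else 0) + inflow n (h @ [(j, v)]) i u))"
      using child by (simp add: sum_mono)
    also have "\<dots> = (if i = j \<and> u = w then 1 else 0) + (if i = j then P j w u else if u = cfg h i then 1 else 0)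
        + (\<Sum>v\<in>V j. P j w v * inflow n (h @ [(j, v)]) i u)"
      using expected_update_indicator[OF finite_states[OF j] transition_outside[OF j w] transition_sum[OF j w],
          of u "cfg h" j i]
      by (simp add: distrib_left sum.distrib)
    also have "\<dots> = (if u = cfg h i then 1 else 0) + inflow (Suc n) h i u"
      using inflow_advance[OF Suc.prems(1) Advance Suc.prems(2)] by (simp add: w_def)
    finally show ?thesis .
  next
    case (Select I)
    then show ?thesis using inflow_nonneg[OF Suc.prems] by simp
  qed
qed

lemma util_fuel_eq_lp_objective:
  "h \<in> reachable \<Longrightarrow> util_fuel V P s price val \<sigma> n h = lp_objective J V T price val (occ n h)"
proof (induction n arbitrary: h)
  case 0
  then show ?case by (simp add: lp_objective_def)
next
  case (Suc n)
  show ?case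
  proof (cases "\<sigma> h")
    case (Advance j)
    define w where "w = cfg h j"
    have j: "j \<in> J" and w: "w \<in> V j - T j"
      using advance_valid config_in_states Suc.prems Advance unfolding w_def by blast+
    have "util_fuel V P s price val \<sigma> (Suc n) h
        = - price j w + (\<Sum>v\<in>V j. P j w v * util_fuel V P s price val \<sigma> n (h @ [(j, v)]))"
      using Advance by (simp add: w_def)
    also have "\<dots> = - price j w + (\<Sum>v\<in>V j. P j w v * lp_objective J V T price val (occ n (h @ [(j, v)])))"
    proof -
      have child: "P j w v * util_fuel V P s price val \<sigma> n (h @ [(j, v)])
          = P j w v * lp_objective J V T price val (occ n (h @ [(j, v)]))" for v
        using advance_successor[OF Suc.prems Advance, of v] Suc.IH by (auto simp: w_def)
      show ?thesis by (simp only: child)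
    qed
    also have "\<dots> = lp_objective J V T price val (occ (Suc n) h)"
      using Advance lp_objective_affine[OF finite_states[OF j], of J V T price val
          "\<lambda>i u. if i = j \<and> u = w then 1 else 0" "P j w" "\<lambda>v. occ n (h @ [(j, v)])"]
        lp_objective_advance[where V = V and T = T, OF finite_J j finite_states[OF j] w]
      by (simp add: w_def)
    finally show ?thesis .
  next
    case (Select I)
    have "I \<subseteq> J" and "\<forall>i\<in>I. cfg h i \<in> T i"
      using select_valid[OF Suc.prems Select] by blast+
    then have "lp_objective J V T price val (\<lambda>i u. if i \<in> I \<and> u = cfg h i then 1 else 0)
        = (\<Sum>i\<in>I. val i (cfg h i))"
      using finite_destinations by (intro lp_objective_select[OF finite_J]) blast+
    then show ?thesis
      using Select by simp
  qed
qed

lemma selection_probability_in: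
  assumes "convex_fun_set PF" and "{} \<in> F" and "\<forall>I\<in>F. indicator I \<in> PF"
  shows "h \<in> reachable \<Longrightarrow> (\<lambda>i. \<Sum>u\<in>T i. occ n h i u) \<in> PF"
proof (induction n arbitrary: h)
  case 0
  have "(\<lambda>i. \<Sum>u\<in>T i. occ 0 h i u) = indicator {}"
    by (simp add: fun_eq_iff)
  then show ?case using assms(2,3) by simp
next
  case (Suc n)
  show ?case
  proof (cases "\<sigma> h")
    case (Advance j)
    define w where "w = cfg h j"
    have j: "j \<in> J" and w: "w \<in> V j" and wT: "w \<notin> T j"
      using advance_valid config_in_states Suc.prems Advance unfolding w_def by blast+
    have successors: "\<forall>v\<in>V j. 0 < P j w v \<longrightarrow> (\<lambda>i. \<Sum>u\<in>T i. occ n (h @ [(j, v)]) i u) \<in> PF"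
    proof (intro ballI impI)
      fix v
      assume "0 < P j w v"
      then have "h @ [(j, v)] \<in> reachable"
        using advance_successor[OF Suc.prems Advance, of v] by (auto simp: w_def)
      then show "(\<lambda>i. \<Sum>u\<in>T i. occ n (h @ [(j, v)]) i u) \<in> PF"
        by (rule Suc.IH)
    qed
    have "\<forall>v\<in>V j. 0 \<le> P j w v"
      using transition_nonneg[OF j w] by blast
    then have "(\<lambda>i. \<Sum>v\<in>V j. P j w v * (\<Sum>u\<in>T i. occ n (h @ [(j, v)]) i u)) \<in> PF"
      using convex_fun_set_sum[OF assms(1) finite_states[OF j] _ transition_sum[OF j w] successors]
      by simp
    moreover have "(\<lambda>i. \<Sum>u\<in>T i. occ (Suc n) h i u)
        = (\<lambda>i. \<Sum>v\<in>V j. P j w v * (\<Sum>u\<in>T i. occ n (h @ [(j, v)]) i u))"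
    proof
      fix i
      have "(\<Sum>u\<in>T i. (if i = j \<and> u = w then 1 else 0 :: real)) = 0"
        using wT by (intro sum.neutral) auto
      then show "(\<Sum>u\<in>T i. occ (Suc n) h i u) = (\<Sum>v\<in>V j. P j w v * (\<Sum>u\<in>T i. occ n (h @ [(j, v)]) i u))"
        using Advance by (simp add: w_def sum.distrib sum_distrib_left sum.swap[of _ "T i"])
    qed
    ultimately show ?thesis by simp
  next
    case (Select I)
    have "I \<in> F" "I \<subseteq> J" "\<forall>i\<in>I. cfg h i \<in> T i"
      using select_valid[OF Suc.prems Select] by blast+
    have "(\<lambda>i. \<Sum>u\<in>T i. occ (Suc n) h i u) = indicator I"
    proof
      fix i
      show "(\<Sum>u\<in>T i. occ (Suc n) h i u) = indicator I i"
        using Select \<open>I \<subseteq> J\<close> \<open>\<forall>i\<in>I. cfg h i \<in> T i\<close> finite_destinations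
        by (cases "i \<in> I") (auto simp: if_distrib cong: if_cong)
    qed
    then show ?thesis using assms(3) \<open>I \<in> F\<close> by simp
  qed
qed

lemma occupation_start_le_one:
  assumes "i \<in> J" and "acyclic (arcs i)"
  shows "occ n [] i (s i) \<le> 1"
proof -
  have no_return: "P i x (s i) * occ n [] i x = 0" if x: "x \<in> V i - T i" for x
  proof (rule ccontr)
    assume "P i x (s i) * occ n [] i x \<noteq> 0"
    then have "(x, s i) \<in> arcs i" and "(s i, x) \<in> (arcs i)\<^sup>*"
      using transition_nonneg[OF assms(1), of x "s i"] x occupation_reaches[OF reachable_hist.Nil]
      by (force simp: ms_arcs_def)+
    then show False
      using assms(2) by (meson acyclic_def rtrancl_into_trancl1)
  qed
  have "occ n [] i (s i) \<le> 1 + inflow n [] i (s i)"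
    using occupation_le_inflow[OF reachable_hist.Nil assms(1), of n "s i"] by simp
  also have "inflow n [] i (s i) = 0"
    unfolding inflow_def by (rule sum.neutral) (use no_return in blast)
  finally show ?thesis by simp
qed

lemma occupation_lp_feasible:
  assumes "convex_fun_set PF" and "{} \<in> F" and "\<forall>I\<in>F. indicator I \<in> PF"
    and "\<And>i. i \<in> J \<Longrightarrow> acyclic (arcs i)"
  shows "((\<lambda>i. \<Sum>u\<in>T i. occ n [] i u), (\<lambda>i u. if u = s i then 1 else inflow n [] i u), occ n [])
           \<in> lp_feasible J V P s T PF"
proof -
  have "occ n [] i u \<le> (if u = s i then 1 else inflow n [] i u)" if "i \<in> J" for i u
    using occupation_start_le_one[OF that assms(4)[OF that]]
      occupation_le_inflow[OF reachable_hist.Nil that, of n u] by (auto split: if_splits)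
  then show ?thesis
    unfolding lp_feasible_def
    using selection_probability_in[OF assms(1-3) reachable_hist.Nil, of n]
      occupation_nonneg[OF reachable_hist.Nil] inflow_nonneg[OF reachable_hist.Nil]
    by (auto simp: inflow_def intro!: sum_nonneg)
qed

end

theorem lemma5:
  fixes J :: "'i set" and F :: "'i set set" and PF :: "('i \<Rightarrow> real) set"
    and V :: "'i \<Rightarrow> 's set" and P :: "'i \<Rightarrow> 's \<Rightarrow> 's \<Rightarrow> real" and s :: "'i \<Rightarrow> 's"
    and T :: "'i \<Rightarrow> 's set" and price val :: "'i \<Rightarrow> 's \<Rightarrow> real"
    and \<sigma> :: "('i, 's) strategy"
  assumes "finite J"
    and "F \<subseteq> Pow J" and "{} \<in> F" and "\<forall>I\<in>F. \<forall>I'. I' \<subseteq> I \<longrightarrow> I' \<in> F"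
    and "convex_fun_set PF" and "\<forall>x\<in>PF. \<forall>i\<in>J. 0 \<le> x i \<and> x i \<le> 1"
    and "\<forall>I\<in>F. indicator I \<in> PF"
    and "\<forall>i\<in>J. dag_markov_system (V i) (P i) (s i) (T i) (price i) (val i)"
    and "valid_strategy J F P s T \<sigma>"
  shows "ereal (utility J V P s price val \<sigma>)
           \<le> (SUP p \<in> lp_feasible J V P s T PF. ereal (lp_objective J V T price val (snd (snd p))))"
proof -
  interpret mpoi_play J F V P s T price val \<sigma>
    using assms by unfold_locales (auto simp: dag_markov_system_def)
  define z where "z = occ (Suc (\<Sum>i\<in>J. card (V i))) []"
  have "\<And>i. i \<in> J \<Longrightarrow> acyclic (arcs i)"
    using assms(8) by (simp add: dag_markov_system_def)
  then obtain x y where feasible: "(x, y, z) \<in> lp_feasible J V P s T PF"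
    using occupation_lp_feasible[OF assms(5,3,7)] unfolding z_def by blast
  have "utility J V P s price val \<sigma> = lp_objective J V T price val z"
    unfolding utility_def z_def by (rule util_fuel_eq_lp_objective[OF reachable_hist.Nil])
  then show ?thesis
    using SUP_upper[OF feasible, of "\<lambda>p. ereal (lp_objective J V T price val (snd (snd p)))"]
    by simp
qed

end
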